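(* Let $V\in\mathcal C(S^1)$ be odd and let $A=I_1\cup\dots\cup I_n\subset S^1$ be a disjoint union of closed intervals $I_j=[\alpha_j,\beta_j]$. Assume that for every continuous $h:S^1\to\mathbb R_{\ge0}$ with $h|_A=0$ one has $(V*h)(\alpha_j)>0$ and $(V*h)(\beta_j)<0$ for all $1\le j\le n$. Let $f:[0,\infty)\times S^1\to\mathbb R_{\ge0}$ be a solution of (TP) with $D=0$ such that $f(0,\cdot)|_A=0$. Then $f(t,\cdot)|_A=0$ for all $t\ge0$; equivalently, $\operatorname{supp}f(0,\cdot)\subset\overline{S^1\setminus A}$ implies $\operatorname{supp}f(t,\cdot)\subset\overline{S^1\setminus A}$ for all $t\ge0$.
   Context: $S^1=\mathbb R/\mathbb Z$; a closed interval $[\alpha,\beta]$ in $S^1$ is a closed connected proper subset with lower end $\alpha$ and upper end $\beta$ (image of $[a,b]\subset\mathbb R$, $b-a<1$). $(V*f)(\theta)=\int_{S^1}V(\theta-\psi)f(\psi)d\psi$. Equation (TP) with $D=0$: $\partial_tf=\partial_\theta((V*f)f)$. *)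

theory Defs
  imports "HOL-Analysis.Analysis"
begin

text \<open>Functions on S^1 = R/Z are represented as 1-periodic functions on the reals.\<close>

definition periodic1 :: "(real \<Rightarrow> 'a) \<Rightarrow> bool" where
  "periodic1 g \<longleftrightarrow> (\<forall>x. g (x + 1) = g x)"

definition circ_conv :: "(real \<Rightarrow> real) \<Rightarrow> (real \<Rightarrow> real) \<Rightarrow> real \<Rightarrow> real" where
  "circ_conv V g \<theta> = integral {0..1} (\<lambda>\<psi>. V (\<theta> - \<psi>) * g \<psi>)"

text \<open>The (lift to R of the) closed interval [a,b] in S^1, for a \<le> b < a + 1.\<close>
definition circ_interval :: "real \<Rightarrow> real \<Rightarrow> real set" where
  "circ_interval a b = {x. \<exists>k::int. a \<le> x + of_int k \<and> x + of_int k \<le> b}"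

text \<open>Classical (C^1) nonnegative solution on [0,oo) x S^1 of
  d_t f = d_theta ((V*f) f), i.e. equation (TP) with D = 0.\<close>
definition tp_solution_D0 :: "(real \<Rightarrow> real) \<Rightarrow> (real \<Rightarrow> real \<Rightarrow> real) \<Rightarrow> bool" where
  "tp_solution_D0 V f \<longleftrightarrow>
     (\<forall>t\<ge>0. periodic1 (f t) \<and> (\<forall>\<theta>. f t \<theta> \<ge> 0)) \<and>
     continuous_on ({0..} \<times> UNIV) (\<lambda>(t, \<theta>). f t \<theta>) \<and>
     (\<exists>ft fx :: real \<times> real \<Rightarrow> real.
        continuous_on ({0..} \<times> UNIV) ft \<and> continuous_on ({0..} \<times> UNIV) fx \<and>
        (\<forall>t\<ge>0. \<forall>\<theta>.
           ((\<lambda>s. f s \<theta>) has_real_derivative ft (t, \<theta>)) (at t within {0..}) \<and>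
           ((\<lambda>x. f t x) has_real_derivative fx (t, \<theta>)) (at \<theta>) \<and>
           ((\<lambda>x. circ_conv V (f t) x * f t x) has_real_derivative ft (t, \<theta>)) (at \<theta>)))"

end

theory Submission
  imports Defs
begin

(* The mass of f(t) in a lifted interval [a,b] has time derivative
   F(t,b) - F(t,a), where F = (V*f) f is the flux.  Since f is transported with
   velocity -(V*f), the sign conditions V*f > 0 at a and V*f < 0 at b mean that
   the flow points out of [a,b] at both ends; then this derivative is <= 0, so a
   nonnegative mass that is zero stays zero, and by continuity f stays zero on
   [a,b].  The hypothesis on V guarantees exactly this outward drift at any time
   at which f does not vanish identically and is already zero on A; by continuity
   in time the drift persists for a short while.  If f vanishes identically at some
   time, conservation of the total mass keeps it zero forever. *)

lemma periodic1_shift_int: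
  assumes "periodic1 g"
  shows "g (x + of_int k) = g x"
proof -
  have shift_nat: "g (y + real m) = g y" for y m
  proof (induction m arbitrary: y)
    case (Suc m)
    have "g (y + real (Suc m)) = g ((y + real m) + 1)" by (simp add: algebra_simps)
    also have "\<dots> = g y" using assms Suc.IH unfolding periodic1_def by simp
    finally show ?case .
  qed simp
  show ?thesis
  proof (cases "k \<ge> 0")
    case True
    then show ?thesis using shift_nat[of x "nat k"] by simp
  next
    case False
    then show ?thesis using shift_nat[of "x + of_int k" "nat (- k)"] by simp
  qed
qed

lemma periodic_vanishing_on_circ_intervals:
  assumes "periodic1 g" and "\<forall>j<n. \<forall>x\<in>{\<alpha> j..\<beta> j}. g x = 0"
  shows "\<forall>x \<in> (\<Union>j<n. circ_interval (\<alpha> j) (\<beta> j)). g x = 0"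
proof
  fix x assume "x \<in> (\<Union>j<n. circ_interval (\<alpha> j) (\<beta> j))"
  then obtain j and k :: int where "j < n" and "x + of_int k \<in> {\<alpha> j..\<beta> j}"
    unfolding circ_interval_def by auto
  then have "g (x + of_int k) = 0" using assms(2) by blast
  then show "g x = 0" using periodic1_shift_int[OF assms(1)] by simp
qed

lemma interval_subset_circ_interval: "{a..b} \<subseteq> circ_interval a b"
  unfolding circ_interval_def by (auto intro!: exI[of _ 0])

lemma circ_conv_periodic:
  assumes "periodic1 V"
  shows "circ_conv V g (x + 1) = circ_conv V g x"
proof -
  have "V (x + 1 - \<psi>) = V (x - \<psi>)" for \<psi>
    using assms unfolding periodic1_def by (metis add_diff_eq diff_add_eq)
  then show ?thesis unfolding circ_conv_def by simp
qed

section \<open>Continuity induction on the half-line\<close>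

lemma real_induction_nonneg:
  fixes P :: "real \<Rightarrow> bool"
  assumes base: "P 0"
    and left_closed: "\<And>T. T > 0 \<Longrightarrow> (\<And>s. 0 \<le> s \<Longrightarrow> s < T \<Longrightarrow> P s) \<Longrightarrow> P T"
    and right_open: "\<And>T. T \<ge> 0 \<Longrightarrow> (\<And>s. 0 \<le> s \<Longrightarrow> s \<le> T \<Longrightarrow> P s) \<Longrightarrow>
                        \<exists>d>0. \<forall>s. T < s \<and> s < T + d \<longrightarrow> P s"
    and "t \<ge> 0"
  shows "P t"
proof (rule ccontr)
  assume "\<not> P t"
  define Bad where "Bad = {s. s \<ge> 0 \<and> \<not> P s}"
  define T where "T = Inf Bad"
  have "t \<in> Bad" using \<open>\<not> P t\<close> \<open>t \<ge> 0\<close> unfolding Bad_def by simp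
  have "bdd_below Bad" unfolding Bad_def by (rule bdd_belowI[of _ 0]) auto
  then have T_le: "T \<le> b" if "b \<in> Bad" for b
    using that unfolding T_def by (rule cInf_lower[rotated])
  have "T \<ge> 0" unfolding T_def using \<open>t \<in> Bad\<close> by (intro cInf_greatest) (auto simp: Bad_def)
  have before_T: "P s" if "0 \<le> s" "s < T" for s
    using that T_le unfolding Bad_def by force
  have "P T"
    using base left_closed[OF _ before_T] \<open>T \<ge> 0\<close> by (cases "T = 0") auto
  then have upto_T: "P s" if "0 \<le> s" "s \<le> T" for s
    using that before_T by (cases "s = T") auto
  obtain d where "d > 0" and after_T: "\<And>s. T < s \<Longrightarrow> s < T + d \<Longrightarrow> P s"
    using right_open[OF \<open>T \<ge> 0\<close> upto_T] by blast
  have "T + d \<le> b" if "b \<in> Bad" for b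
    using that T_le[OF that] upto_T after_T unfolding Bad_def by force
  then have "T + d \<le> T"
    unfolding T_def using \<open>t \<in> Bad\<close> by (intro cInf_greatest) auto
  with \<open>d > 0\<close> show False by simp
qed

section \<open>Two facts on conservation laws\<close>

text \<open>For a density f with continuous time derivative ft = d_x G, the mass in [a,b]
  changes at the rate G(b) - G(a) (Leibniz rule and fundamental theorem of calculus).\<close>
lemma mass_flux_deriv:
  fixes f :: "real \<Rightarrow> real \<Rightarrow> real" and ft :: "real \<times> real \<Rightarrow> real"
  assumes cont_ft: "continuous_on ({0..} \<times> UNIV) ft"
    and deriv_t: "\<And>t \<theta>. t \<ge> 0 \<Longrightarrow> ((\<lambda>s. f s \<theta>) has_real_derivative ft (t, \<theta>)) (at t within {0..})"
    and deriv_x: "\<And>t \<theta>. t \<ge> 0 \<Longrightarrow> (G t has_real_derivative ft (t, \<theta>)) (at \<theta>)"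
    and cont_f: "\<And>t. t \<ge> 0 \<Longrightarrow> continuous_on UNIV (f t)"
    and "a \<le> b" and "t \<ge> 0"
  shows "((\<lambda>s. integral {a..b} (f s)) has_real_derivative (G t b - G t a)) (at t within {0..})"
proof -
  have leibniz: "((\<lambda>s. integral (cbox a b) (f s)) has_real_derivative
      integral (cbox a b) (\<lambda>\<theta>. ft (t, \<theta>))) (at t within {0..})"
  proof (rule leibniz_rule_field_derivative)
    show "continuous_on ({0..} \<times> cbox a b) (\<lambda>(x, y). ft (x, y))"
      using cont_ft by (simp add: case_prod_eta) (rule continuous_on_subset, auto)
    show "\<And>x. x \<in> {0..} \<Longrightarrow> f x integrable_on cbox a b"
      using cont_f by (metis atLeast_iff continuous_on_subset integrable_continuous subset_UNIV)
  qed (use deriv_t \<open>t \<ge> 0\<close> in auto)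
  have "((\<lambda>\<theta>. ft (t, \<theta>)) has_integral (G t b - G t a)) {a..b}"
    using \<open>a \<le> b\<close> deriv_x[OF \<open>t \<ge> 0\<close>]
    by (intro fundamental_theorem_of_calculus)
      (auto simp: has_real_derivative_iff_has_vector_derivative[symmetric] intro: has_field_derivative_at_within)
  with leibniz show ?thesis by (simp add: integral_unique)
qed

text \<open>If the density has a continuous time derivative, its convolution with a continuous
  kernel is continuous in time (it is even differentiable, by the Leibniz rule).\<close>
lemma circ_conv_continuous_in_time:
  fixes f :: "real \<Rightarrow> real \<Rightarrow> real" and ft :: "real \<times> real \<Rightarrow> real"
  assumes cont_ft: "continuous_on ({0..} \<times> UNIV) ft"
    and deriv_t: "\<And>t \<theta>. t \<ge> 0 \<Longrightarrow> ((\<lambda>s. f s \<theta>) has_real_derivative ft (t, \<theta>)) (at t within {0..})"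
    and cont_f: "\<And>t. t \<ge> 0 \<Longrightarrow> continuous_on UNIV (f t)"
    and cont_V: "continuous_on UNIV V" and "t \<ge> 0"
  shows "continuous (at t within {0..}) (\<lambda>s. circ_conv V (f s) \<theta>)"
proof -
  have cont_kernel: "continuous_on S (\<lambda>p. V (\<theta> - g p))" if "continuous_on S g" for S g
    by (rule continuous_on_compose2[OF cont_V]) (use that in \<open>auto intro!: continuous_intros\<close>)
  have "((\<lambda>s. integral (cbox 0 1) (\<lambda>\<psi>. V (\<theta> - \<psi>) * f s \<psi>)) has_real_derivative
      integral (cbox 0 1) (\<lambda>\<psi>. V (\<theta> - \<psi>) * ft (t, \<psi>))) (at t within {0..})"
  proof (rule leibniz_rule_field_derivative)
    have "continuous_on ({0..} \<times> cbox 0 1) ft"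
      using cont_ft by (rule continuous_on_subset) auto
    then show "continuous_on ({0..} \<times> cbox 0 1) (\<lambda>(x, y). V (\<theta> - y) * ft (x, y))"
      using continuous_on_mult[OF cont_kernel[of _ snd]] by (simp add: case_prod_beta continuous_on_snd)
    show "(\<lambda>\<psi>. V (\<theta> - \<psi>) * f x \<psi>) integrable_on cbox 0 1" if "x \<in> {0..}" for x
      using that cont_f cont_kernel[of UNIV "\<lambda>\<psi>. \<psi>"]
      by (intro integrable_continuous continuous_on_subset[OF continuous_on_mult]) auto
  qed (use deriv_t \<open>t \<ge> 0\<close> in \<open>auto intro: DERIV_cmult\<close>)
  then show ?thesis unfolding circ_conv_def by (auto dest!: DERIV_continuous)
qed

section \<open>Properties of solutions of (TP) with D = 0\<close>

lemma tp_solution_D0_props: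
  assumes "tp_solution_D0 V f" and "t \<ge> 0"
  shows "periodic1 (f t)" and "f t \<theta> \<ge> 0" and "continuous_on UNIV (f t)"
    and "continuous (at t within {0..}) (\<lambda>s. f s \<theta>)"
proof -
  have cont: "continuous_on ({0..} \<times> UNIV) (\<lambda>(t, \<theta>). f t \<theta>)"
    using assms(1) unfolding tp_solution_D0_def by blast
  show "periodic1 (f t)" "f t \<theta> \<ge> 0"
    using assms unfolding tp_solution_D0_def by auto
  have "continuous_on UNIV (\<lambda>x. (\<lambda>(t, \<theta>). f t \<theta>) (t, x))"
    by (rule continuous_on_compose2[OF cont]) (use \<open>t \<ge> 0\<close> in \<open>auto intro!: continuous_intros\<close>)
  then show "continuous_on UNIV (f t)" by simp
  have "continuous_on {0..} (\<lambda>s. (\<lambda>(t, \<theta>). f t \<theta>) (s, \<theta>))"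
    by (rule continuous_on_compose2[OF cont]) (auto intro!: continuous_intros)
  then show "continuous (at t within {0..}) (\<lambda>s. f s \<theta>)"
    using \<open>t \<ge> 0\<close> by (simp add: continuous_on_eq_continuous_within)
qed

lemma tp_solution_D0_fluxE:
  assumes "tp_solution_D0 V f"
  obtains ft where "continuous_on ({0..} \<times> UNIV) ft"
    and "\<And>t \<theta>. t \<ge> 0 \<Longrightarrow> ((\<lambda>s. f s \<theta>) has_real_derivative ft (t, \<theta>)) (at t within {0..})"
    and "\<And>t \<theta>. t \<ge> 0 \<Longrightarrow>
           ((\<lambda>x. circ_conv V (f t) x * f t x) has_real_derivative ft (t, \<theta>)) (at \<theta>)"
  using assms unfolding tp_solution_D0_def by blast

lemma tp_local_mass_deriv:
  assumes sol: "tp_solution_D0 V f" and "a \<le> b" and "t \<ge> 0"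
  shows "((\<lambda>s. integral {a..b} (f s)) has_real_derivative
            circ_conv V (f t) b * f t b - circ_conv V (f t) a * f t a) (at t within {0..})"
proof -
  obtain ft where "continuous_on ({0..} \<times> UNIV) ft"
    and "\<And>t \<theta>. t \<ge> 0 \<Longrightarrow> ((\<lambda>s. f s \<theta>) has_real_derivative ft (t, \<theta>)) (at t within {0..})"
    and "\<And>t \<theta>. t \<ge> 0 \<Longrightarrow>
           ((\<lambda>x. circ_conv V (f t) x * f t x) has_real_derivative ft (t, \<theta>)) (at \<theta>)"
    using tp_solution_D0_fluxE[OF sol] by blast
  from mass_flux_deriv[where G = "\<lambda>t x. circ_conv V (f t) x * f t x", OF this]
  show ?thesis using tp_solution_D0_props(3)[OF sol] assms(2,3) by blast
qed

lemma tp_velocity_continuous: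
  assumes sol: "tp_solution_D0 V f" and "continuous_on UNIV V" and "t \<ge> 0"
  shows "continuous (at t within {0..}) (\<lambda>s. circ_conv V (f s) \<theta>)"
proof -
  obtain ft where cont_ft: "continuous_on ({0..} \<times> UNIV) ft"
    and deriv_t: "\<And>t \<theta>. t \<ge> 0 \<Longrightarrow> ((\<lambda>s. f s \<theta>) has_real_derivative ft (t, \<theta>)) (at t within {0..})"
    and "\<And>t \<theta>. t \<ge> 0 \<Longrightarrow>
           ((\<lambda>x. circ_conv V (f t) x * f t x) has_real_derivative ft (t, \<theta>)) (at \<theta>)"
    using tp_solution_D0_fluxE[OF sol] by blast
  show ?thesis
    by (rule circ_conv_continuous_in_time[OF cont_ft deriv_t tp_solution_D0_props(3)[OF sol] assms(2,3)])
qed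

text \<open>Conservation of the total mass, since the flux is periodic.\<close>
lemma tp_mass_conserved:
  assumes sol: "tp_solution_D0 V f" and "periodic1 V" and "t \<ge> 0"
  shows "integral {0..1} (f t) = integral {0..1} (f 0)"
proof -
  have "((\<lambda>s. integral {0..1} (f s)) has_real_derivative 0) (at r within {0..})" if "r \<ge> 0" for r
  proof -
    have "f r 1 = f r 0"
      using tp_solution_D0_props(1)[OF sol that] unfolding periodic1_def by (metis add_0)
    moreover have "circ_conv V (f r) 1 = circ_conv V (f r) 0"
      using circ_conv_periodic[OF assms(2), of "f r" 0] by simp
    ultimately show ?thesis using tp_local_mass_deriv[OF sol _ that, of 0 1] by simp
  qed
  then have "\<exists>c. \<forall>s\<in>{0::real..}. integral {0..1} (f s) = c"
    by (intro has_field_derivative_zero_constant) (auto simp: convex_real_interval)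
  then obtain c where "\<forall>s\<in>{0::real..}. integral {0..1} (f s) = c" by blast
  with \<open>t \<ge> 0\<close> show ?thesis by auto
qed

lemma tp_zero_stays_zero:
  assumes sol: "tp_solution_D0 V f" and "periodic1 V"
    and "T \<ge> 0" and zero: "\<forall>x. f T x = 0" and "t \<ge> 0"
  shows "f t x = 0"
proof -
  have cont: "continuous_on {0..1} (f t)"
    using tp_solution_D0_props(3)[OF sol \<open>t \<ge> 0\<close>] by (rule continuous_on_subset) simp
  have "integral {0..1} (f t) = integral {0..1} (f T)"
    using tp_mass_conserved[OF sol assms(2) \<open>t \<ge> 0\<close>] tp_mass_conserved[OF sol assms(2) \<open>T \<ge> 0\<close>]
    by (rule trans[OF _ sym])
  also have "\<dots> = 0"
    using zero by (simp add: fun_eq_iff[symmetric])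
  finally have vanish: "\<forall>y\<in>{0..1}. f t y = 0"
    by (rule iffD1[OF integral_eq_0_iff[OF cont zero_less_one tp_solution_D0_props(2)[OF sol \<open>t \<ge> 0\<close>]]])
  have "frac x \<in> {0..1}" using frac_ge_0[of x] frac_lt_1[of x] by simp
  then have "f t (frac x) = 0" using vanish by blast
  moreover have "f t (frac x + of_int \<lfloor>x\<rfloor>) = f t (frac x)"
    by (rule periodic1_shift_int[OF tp_solution_D0_props(1)[OF sol \<open>t \<ge> 0\<close>]])
  ultimately show ?thesis by (simp add: frac_def)
qed

lemma tp_vanishing_left_closed:
  assumes sol: "tp_solution_D0 V f" and "T > 0"
    and before: "\<And>s. 0 \<le> s \<Longrightarrow> s < T \<Longrightarrow> f s x = 0"
  shows "f T x = 0"
proof -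
  have "at T within {0..T} = at_left T"
    using \<open>T > 0\<close> by (rule at_within_Icc_at_left)
  then have nontrivial: "at T within {0..T} \<noteq> bot"
    by (simp only: trivial_limit_at_left_real not_False_eq_True)
  have "continuous (at T within {0..T}) (\<lambda>s. f s x)"
    using tp_solution_D0_props(4)[OF sol less_imp_le[OF \<open>T > 0\<close>]]
    by (rule continuous_within_subset) auto
  then have lim: "((\<lambda>s. f s x) \<longlongrightarrow> f T x) (at T within {0..T})"
    by (simp add: continuous_within)
  have "eventually (\<lambda>s. f s x \<in> {0}) (at T within {0..T})"
    unfolding eventually_at_filter by (rule always_eventually) (use before in auto)
  from Lim_in_closed_set[OF closed_singleton this nontrivial lim] show ?thesis by simp
qed

text \<open>If the flow points out of [a,b] at both ends during (T,s), an empty interval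
  stays empty: its nonnegative mass is nonincreasing and starts at zero.\<close>
lemma tp_interval_stays_empty:
  assumes sol: "tp_solution_D0 V f" and "a < b" and "0 \<le> T" and "T \<le> s"
    and empty: "\<forall>x\<in>{a..b}. f T x = 0"
    and outward: "\<And>r. T < r \<Longrightarrow> r < s \<Longrightarrow> circ_conv V (f r) a \<ge> 0 \<and> circ_conv V (f r) b \<le> 0"
  shows "\<forall>x\<in>{a..b}. f s x = 0"
proof -
  define M where "M r = integral {a..b} (f r)" for r
  have deriv: "(M has_real_derivative
      circ_conv V (f r) b * f r b - circ_conv V (f r) a * f r a) (at r within {0..})" if "r \<ge> 0" for r
    unfolding M_def using tp_local_mass_deriv[OF sol _ that] \<open>a < b\<close> by simp
  have "M s \<le> M T"
  proof (rule DERIV_nonpos_imp_decreasing_open[OF \<open>T \<le> s\<close>])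
    show "continuous_on {T..s} M"
      unfolding continuous_on_eq_continuous_within
    proof
      fix r assume r: "r \<in> {T..s}"
      have "continuous (at r within {0..}) M"
        by (rule DERIV_continuous[OF deriv]) (use r \<open>0 \<le> T\<close> in simp)
      then show "continuous (at r within {T..s}) M"
        by (rule continuous_within_subset) (use \<open>0 \<le> T\<close> in auto)
    qed
    fix r assume r: "T < r" "r < s"
    then have "r > 0" using \<open>0 \<le> T\<close> by simp
    then have "at r within {0..} = at r"
      by (intro at_within_interior) (simp add: interior_Ici[of "-1"])
    then have "(M has_real_derivative
        circ_conv V (f r) b * f r b - circ_conv V (f r) a * f r a) (at r)"
      using deriv[of r] \<open>r > 0\<close> by simp
    moreover have "circ_conv V (f r) b * f r b \<le> 0" and "circ_conv V (f r) a * f r a \<ge> 0"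
      using outward[OF r] tp_solution_D0_props(2)[OF sol, of r] \<open>r > 0\<close>
      by (simp_all add: mult_nonpos_nonneg)
    ultimately show "\<exists>y. (M has_real_derivative y) (at r) \<and> y \<le> 0"
      by (intro exI[of _ "circ_conv V (f r) b * f r b - circ_conv V (f r) a * f r a"]) simp
  qed
  moreover have "M T = 0"
  proof -
    have "M T = integral {a..b} (\<lambda>_. 0::real)"
      unfolding M_def using empty by (intro integral_cong) simp
    then show ?thesis by simp
  qed
  moreover have "s \<ge> 0" using assms(3,4) by simp
  then have nonneg: "\<And>x. x \<in> {a..b} \<Longrightarrow> f s x \<ge> 0"
    and cont: "continuous_on {a..b} (f s)"
    using tp_solution_D0_props(2,3)[OF sol] continuous_on_subset by blast+
  then have "M s \<ge> 0" unfolding M_def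
    by (intro integral_nonneg integrable_continuous_real)
  ultimately have "integral {a..b} (f s) = 0" unfolding M_def by simp
  then show ?thesis
    using integral_eq_0_iff[OF cont \<open>a < b\<close> nonneg] by simp
qed

text \<open>A strict outward drift at time T persists for a short time by continuity, so the
  intervals that are empty at time T remain empty slightly beyond T.  Degenerate
  intervals a = b cannot occur here, as the two sign conditions would contradict.\<close>
lemma tp_vanishing_persists:
  fixes \<alpha> \<beta> :: "nat \<Rightarrow> real"
  assumes sol: "tp_solution_D0 V f" and cont_V: "continuous_on UNIV V" and "T \<ge> 0"
    and drift: "\<forall>j<n. circ_conv V (f T) (\<alpha> j) > 0 \<and> circ_conv V (f T) (\<beta> j) < 0"
    and empty: "\<forall>j<n. \<forall>x\<in>{\<alpha> j..\<beta> j}. f T x = 0"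
  shows "\<exists>d>0. \<forall>s. T < s \<and> s < T + d \<longrightarrow> (\<forall>j<n. \<forall>x\<in>{\<alpha> j..\<beta> j}. f s x = 0)"
proof -
  have lim: "((\<lambda>s. circ_conv V (f s) \<theta>) \<longlongrightarrow> circ_conv V (f T) \<theta>) (at T within {0..})" for \<theta>
    using tp_velocity_continuous[OF sol cont_V \<open>T \<ge> 0\<close>] by (simp add: continuous_within)
  have "eventually (\<lambda>s. \<forall>j\<in>{..<n}. circ_conv V (f s) (\<alpha> j) > 0 \<and> circ_conv V (f s) (\<beta> j) < 0)
          (at T within {0..})"
  proof (rule eventually_ball_finite, simp, intro ballI eventually_conj)
    fix j assume "j \<in> {..<n}"
    then have pos: "0 < circ_conv V (f T) (\<alpha> j)" and neg: "circ_conv V (f T) (\<beta> j) < 0"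
      using drift by simp_all
    show "\<forall>\<^sub>F s in at T within {0..}. 0 < circ_conv V (f s) (\<alpha> j)"
      by (rule order_tendstoD(1)[OF lim pos])
    show "\<forall>\<^sub>F s in at T within {0..}. circ_conv V (f s) (\<beta> j) < 0"
      by (rule order_tendstoD(2)[OF lim neg])
  qed
  then obtain d where "d > 0" and near_T: "\<And>s. s \<in> {0..} \<Longrightarrow> s \<noteq> T \<Longrightarrow> dist s T < d \<Longrightarrow>
      (\<forall>j\<in>{..<n}. circ_conv V (f s) (\<alpha> j) > 0 \<and> circ_conv V (f s) (\<beta> j) < 0)"
    unfolding eventually_at by auto
  have "\<forall>x\<in>{\<alpha> j..\<beta> j}. f s x = 0" if s: "T < s" "s < T + d" and "j < n" for s j
  proof (cases "\<alpha> j < \<beta> j")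
    case True
    have "circ_conv V (f r) (\<alpha> j) \<ge> 0 \<and> circ_conv V (f r) (\<beta> j) \<le> 0" if "T < r" "r < s" for r
    proof -
      have "r \<in> {0..}" "r \<noteq> T" "dist r T < d"
        using that s \<open>T \<ge> 0\<close> by (auto simp: dist_real_def)
      from near_T[OF this] have "0 < circ_conv V (f r) (\<alpha> j) \<and> circ_conv V (f r) (\<beta> j) < 0"
        using \<open>j < n\<close> by blast
      then show ?thesis by simp
    qed
    moreover have "\<forall>x\<in>{\<alpha> j..\<beta> j}. f T x = 0" using empty \<open>j < n\<close> by blast
    ultimately show ?thesis
      using tp_interval_stays_empty[OF sol True \<open>T \<ge> 0\<close>] s by simp
  next
    case False
    then have "\<alpha> j > \<beta> j"
      using drift \<open>j < n\<close> by (metis less_asym linorder_neqE_linordered_idom)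
    then show ?thesis by simp
  qed
  with \<open>d > 0\<close> show ?thesis by blast
qed

text \<open>The induction step to the right: at a time T at which f vanishes on all lifts,
  either f(T) vanishes identically and then forever, or the hypothesis on V applies to
  h = f(T) and yields a strict outward drift, which keeps the lifts empty for a while.\<close>
lemma tp_vanishing_right_open:
  fixes \<alpha> \<beta> :: "nat \<Rightarrow> real"
  assumes sol: "tp_solution_D0 V f" and V_cont: "continuous_on UNIV V" and V_per: "periodic1 V"
    and drift: "\<forall>h. continuous_on UNIV h \<and> periodic1 h \<and> (\<forall>x. h x \<ge> 0) \<and> (\<exists>x. h x \<noteq> 0) \<and>
                  (\<forall>x \<in> (\<Union>j<n. circ_interval (\<alpha> j) (\<beta> j)). h x = 0)
                  \<longrightarrow> (\<forall>j<n. circ_conv V h (\<alpha> j) > 0 \<and> circ_conv V h (\<beta> j) < 0)"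
    and T: "T \<ge> 0" and empty: "\<forall>j<n. \<forall>x\<in>{\<alpha> j..\<beta> j}. f T x = 0"
  shows "\<exists>d>0. \<forall>s. T < s \<and> s < T + d \<longrightarrow> (\<forall>j<n. \<forall>x\<in>{\<alpha> j..\<beta> j}. f s x = 0)"
proof (cases "\<forall>x. f T x = 0")
  case True
  then show ?thesis
    using tp_zero_stays_zero[OF sol V_per T True] T by (intro exI[of _ 1]) simp
next
  case False
  have "continuous_on UNIV (f T) \<and> periodic1 (f T) \<and> (\<forall>x. f T x \<ge> 0) \<and> (\<exists>x. f T x \<noteq> 0) \<and>
        (\<forall>x \<in> (\<Union>j<n. circ_interval (\<alpha> j) (\<beta> j)). f T x = 0)"
    using tp_solution_D0_props[OF sol T] False
      periodic_vanishing_on_circ_intervals[OF tp_solution_D0_props(1)[OF sol T] empty]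
    by blast
  with spec[OF drift, of "f T"]
  have "\<forall>j<n. circ_conv V (f T) (\<alpha> j) > 0 \<and> circ_conv V (f T) (\<beta> j) < 0" by (rule mp)
  then show ?thesis by (rule tp_vanishing_persists[OF sol V_cont T _ empty])
qed

theorem mainTheorem17:
  fixes V :: "real \<Rightarrow> real" and n :: nat and \<alpha> \<beta> :: "nat \<Rightarrow> real"
    and f :: "real \<Rightarrow> real \<Rightarrow> real"
  assumes V_cont: "continuous_on UNIV V" and V_per: "periodic1 V"
    and V_odd: "\<forall>x. V (- x) = - V x"
    and intervals: "\<forall>j<n. \<alpha> j \<le> \<beta> j \<and> \<beta> j < \<alpha> j + 1"
    and disjoint: "\<forall>i<n. \<forall>j<n. i \<noteq> j \<longrightarrow>
                     circ_interval (\<alpha> i) (\<beta> i) \<inter> circ_interval (\<alpha> j) (\<beta> j) = {}"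
    and drift: "\<forall>h. continuous_on UNIV h \<and> periodic1 h \<and> (\<forall>x. h x \<ge> 0) \<and> (\<exists>x. h x \<noteq> 0) \<and>
                  (\<forall>x \<in> (\<Union>j<n. circ_interval (\<alpha> j) (\<beta> j)). h x = 0)
                  \<longrightarrow> (\<forall>j<n. circ_conv V h (\<alpha> j) > 0 \<and> circ_conv V h (\<beta> j) < 0)"
    and sol: "tp_solution_D0 V f"
    and init: "\<forall>x \<in> (\<Union>j<n. circ_interval (\<alpha> j) (\<beta> j)). f 0 x = 0"
  shows "\<forall>t\<ge>0. \<forall>x \<in> (\<Union>j<n. circ_interval (\<alpha> j) (\<beta> j)). f t x = 0"
proof -
  define P where "P t \<longleftrightarrow> (\<forall>j<n. \<forall>x\<in>{\<alpha> j..\<beta> j}. f t x = 0)" for t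
  have lifts: "P t" if "t \<ge> 0" for t
  proof (rule real_induction_nonneg[OF _ _ _ that])
    show "P 0" using init interval_subset_circ_interval unfolding P_def by blast
  next
    fix T :: real assume "T > 0" and before_T: "\<And>s. 0 \<le> s \<Longrightarrow> s < T \<Longrightarrow> P s"
    show "P T" unfolding P_def
    proof (intro allI impI ballI)
      fix j x assume "j < n" and "x \<in> {\<alpha> j..\<beta> j}"
      with before_T show "f T x = 0"
        unfolding P_def by (intro tp_vanishing_left_closed[OF sol \<open>T > 0\<close>]) blast
    qed
  next
    fix T :: real assume T: "T \<ge> 0" and "\<And>s. 0 \<le> s \<Longrightarrow> s \<le> T \<Longrightarrow> P s"
    then have "P T" by simp
    from tp_vanishing_right_open[OF sol V_cont V_per drift T this[unfolded P_def]]
    show "\<exists>d>0. \<forall>s. T < s \<and> s < T + d \<longrightarrow> P s" unfolding P_def .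
  qed
  show ?thesis
  proof (intro allI impI)
    fix t :: real assume "t \<ge> 0"
    show "\<forall>x \<in> (\<Union>j<n. circ_interval (\<alpha> j) (\<beta> j)). f t x = 0"
      using periodic_vanishing_on_circ_intervals[OF tp_solution_D0_props(1)[OF sol \<open>t \<ge> 0\<close>]]
        lifts[OF \<open>t \<ge> 0\<close>] unfolding P_def by blast
  qed
qed

end
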